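(* Let $Q$ and $W$ satisfy the standing assumptions, let $l,m\in\mathbb N_0$ with $m\le l$, and let $\mathcal R=\{(x,\hat x)\in X\times\hat X^{I^l_m}:\hat x\in E^{I^l_m}(x)\}$. Then (i) $\mathcal R$ is a simulation relation from $Q$ to $\hat Q^{I^l_m}$ w.r.t. $U\times Y$ if and only if $Q$ is future unique w.r.t. $I^l_m$; and (ii) $\mathcal R^{-1}$ is a simulation relation from $\hat Q^{I^l_m}$ to $Q$ w.r.t. $W$ if and only if $Q$ is state-based asynchronously $l$-complete w.r.t. $I^l_m$.
   Context: Strings and signals: $\diamond$ is a symbol not in any other set considered. For a set $A$ and $l\in\mathbb N_0$, $A^l$ is the set of strings of length $l$ over $A$, indexed $\zeta=\zeta(0)\cdots\zeta(l-1)$; $\lambda$ is the empty string and $\cdot$ denotes concatenation. For a map $w$ on $\mathbb Z$ (or a string) and integers $t_1\le t_2$, $w|_{[t_1,t_2]}=w(t_1)\cdots w(t_2)$ is the string of length $t_2-t_1+1$ (absolute time forgotten); if $t_2<t_1$ it is $\lambda$. For a set $\mathcal S$ of such maps or strings, $\mathcal S|_{[t_1,t_2]}=\{s|_{[t_1,t_2]}:s\in\mathcal S\}$. State machines: a state machine is $Q=(X,U,Y,\delta,X_0)$ with $X_0\subseteq X$, $\delta\subseteq X\times U\times Y\times X$. Let $H_\delta(x)=\{y:\exists u,x'.\,(x,u,y,x')\in\delta\}$, $F_\delta(x,u)=\{x':\exists y\in H_\delta(x).\,(x,u,y,x')\in\delta\}$, $T_\delta(x)=\bigcup_{u\in U}F_\delta(x,u)$.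 The full behavior $\mathcal B_f(Q)$ is the set of $(\mu,\nu,\xi)\in(U\times Y\times X)^{\mathbb N_0}$ with $\xi(0)\in X_0$ and $(\xi(k),\mu(k),\nu(k),\xi(k+1))\in\delta$ for all $k\in\mathbb N_0$. $Q$ is live and reachable if every $x\in X_0$ is $\xi(0)$ for some $(\mu,\nu,\xi)\in\mathcal B_f(Q)$ and every $x\in X$ is $\xi(k)$ for some such trajectory and some $k$. Standing assumptions: $Q=(X,U,Y,\delta,X_0)$ is live and reachable and satisfies $(x,u,y,x')\in\delta\iff(x'\in F_\delta(x,u)\wedge y\in H_\delta(x))$ for all $x,x'\in X,u\in U,y\in Y$; the external signal space $W$ is finite and either $W=U\times Y$ or $W=Y$. The projection $\pi_W(u,y)$ is $(u,y)$ if $W=U\times Y$ and $y$ if $W=Y$ (likewise $\pi_{U\times Y}(u,y)=(u,y)$, $\pi_Y(u,y)=y$). Behaviors: for a state machine $Q'$ with input set $U$ and output set $Y$, $\mathcal B(Q')$ is the set of $w:\mathbb Z\to W\cup\{\diamond\}$ such that for some $(\mu,\nu,\xi)\in\mathcal B_f(Q')$, $w(k)=\diamond$ for $k<0$ and $w(k)=\pi_W(\mu(k),\nu(k))$ for $k\ge0$. $\mathcal B_S(Q)$ is the set of pairs $(w,\xi)$ of maps on $\mathbb Z$ with $w(k)=\xi(k)=\diamond$ for $k<0$ and $(w(k),\xi(k))=(\pi_W(\mu(k),\nu(k)),\xi'(k))$ for $k\ge0$, for some $(\mu,\nu,\xi')\in\mathcal B_f(Q)$. For a set $\mathcal B$ of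 maps on $\mathbb Z$, $\Pi_l(\mathcal B)=\bigcup_{k\in\mathbb N_0}\mathcal B|_{[k-l+1,k]}$. Corresponding strings: for integers $a,b$ and $x\in X$, $E^{[a,b]}(x)=\{\zeta:\exists(w,\xi)\in\mathcal B_S(Q),k\in\mathbb N_0:\ \xi(k)=x,\ \zeta=w|_{[k+a,k+b]}\}$. For $l,m\in\mathbb N_0$ with $m\le l$, $I^l_m=[m-l,m-1]$. Future uniqueness: $Q$ is future unique w.r.t. $I^l_m$ if for all $x\in X$ and $\zeta,\zeta'\in E^{I^l_m}(x)$, $\zeta|_{[l-m,l-1]}=\zeta'|_{[l-m,l-1]}$. State-based asynchronous $l$-completeness: $Q$ is state-based asynchronously $l$-complete w.r.t. $I^l_m$ if for all $x\in X$ and $\zeta\in\Pi_{l+1}(\mathcal B(Q))$, $\zeta|_{[0,l-1]}\in E^{I^l_m}(x)$ implies $\zeta\in E^{[m-l,m]}(x)$. Abstract state machine: $\hat Q^{I^l_m}=(\hat X^{I^l_m},U,Y,\hat\delta^{I^l_m},\hat X^{I^l_m}_0)$ with $\hat X^{I^l_m}=\bigcup_{x\in X}E^{I^l_m}(x)$, $\hat X^{I^l_m}_0=\bigcup_{x\in X_0}E^{I^l_m}(x)$, and $(\hat x,u,y,\hat x')\in\hat\delta^{I^l_m}$ iff (1) $\hat x'|_{[0,l-m-1]}=(\hat x|_{[0,l-m-1]}\cdot\pi_W(u,y))|_{[1,l-m]}$, (2) $\hat x|_{[l-m,l-1]}=(\pi_W(u,y)\cdot\hat x'|_{[l-m,l-2]})|_{[0,m-1]}$,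 and (3) there are $x,x'\in X$ with $\hat x\in E^{I^l_m}(x)$, $\hat x'\in E^{I^l_m}(x')$, $(x,u,y,x')\in\delta$. Simulation relations: for state machines $Q_i=(X_i,U,Y,\delta_i,X_{0,i})$, $i=1,2$, and $V\in\{U\times Y,Y\}$, a relation $\mathcal R\subseteq X_1\times X_2$ is a simulation relation from $Q_1$ to $Q_2$ w.r.t. $V$ if (a) for every $x_1\in X_{0,1}$ there is $x_2\in X_{0,2}$ with $(x_1,x_2)\in\mathcal R$, and (b) for all $(x_1,x_2)\in\mathcal R$ and $(x_1,u_1,y_1,x_1')\in\delta_1$ there exist $u_2,y_2,x_2'$ with $(x_2,u_2,y_2,x_2')\in\delta_2$, $(x_1',x_2')\in\mathcal R$ and $\pi_V(u_1,y_1)=\pi_V(u_2,y_2)$. $\mathcal R^{-1}=\{(x_2,x_1):(x_1,x_2)\in\mathcal R\}$. *)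

theory Defs
  imports Main
begin

record ('x,'u,'y) sm =
  St   :: "'x set"
  In   :: "'u set"
  Out  :: "'y set"
  Tr   :: "('x \<times> 'u \<times> 'y \<times> 'x) set"
  Init :: "'x set"

definition is_sm :: "('x,'u,'y) sm \<Rightarrow> bool" where
  "is_sm Q \<longleftrightarrow> Init Q \<subseteq> St Q \<and> Tr Q \<subseteq> St Q \<times> In Q \<times> Out Q \<times> St Q"

text \<open>External signals: W = U x Y (flag full = True) or W = Y (full = False).
  An element of W is encoded as a pair ('u option, 'y): (Some u, y) for W = U x Y,
  (None, y) for W = Y. The extra symbol diamond is encoded as None in the type
  ('u option x 'y) option.\<close>
type_synonym ('u,'y) sig = "'u option \<times> 'y"

definition piV :: "bool \<Rightarrow> 'u \<Rightarrow> 'y \<Rightarrow> ('u,'y) sig" where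
  "piV full u y = (if full then Some u else None, y)"

definition W_finite :: "('x,'u,'y) sm \<Rightarrow> bool \<Rightarrow> bool" where
  "W_finite Q full \<longleftrightarrow> finite (Out Q) \<and> (full \<longrightarrow> finite (In Q))"

definition H :: "('x,'u,'y) sm \<Rightarrow> 'x \<Rightarrow> 'y set" where
  "H Q x = {y. \<exists>u x'. (x,u,y,x') \<in> Tr Q}"

definition F :: "('x,'u,'y) sm \<Rightarrow> 'x \<Rightarrow> 'u \<Rightarrow> 'x set" where
  "F Q x u = {x'. \<exists>y \<in> H Q x. (x,u,y,x') \<in> Tr Q}"

definition T :: "('x,'u,'y) sm \<Rightarrow> 'x \<Rightarrow> 'x set" where
  "T Q x = (\<Union>u \<in> In Q. F Q x u)"

definition full_beh :: "('x,'u,'y) sm \<Rightarrow> ((nat \<Rightarrow> 'u) \<times> (nat \<Rightarrow> 'y) \<times> (nat \<Rightarrow> 'x)) set" where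
  "full_beh Q = {(\<mu>,\<nu>,\<xi>). \<xi> 0 \<in> Init Q \<and> (\<forall>k. (\<xi> k, \<mu> k, \<nu> k, \<xi> (Suc k)) \<in> Tr Q)}"

definition live_reachable :: "('x,'u,'y) sm \<Rightarrow> bool" where
  "live_reachable Q \<longleftrightarrow>
     (\<forall>x \<in> Init Q. \<exists>\<mu> \<nu> \<xi>. (\<mu>,\<nu>,\<xi>) \<in> full_beh Q \<and> \<xi> 0 = x) \<and>
     (\<forall>x \<in> St Q. \<exists>\<mu> \<nu> \<xi> k. (\<mu>,\<nu>,\<xi>) \<in> full_beh Q \<and> \<xi> k = x)"

definition standing_tr :: "('x,'u,'y) sm \<Rightarrow> bool" where
  "standing_tr Q \<longleftrightarrow> (\<forall>x \<in> St Q. \<forall>x' \<in> St Q. \<forall>u \<in> In Q. \<forall>y \<in> Out Q.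
      (x,u,y,x') \<in> Tr Q \<longleftrightarrow> (x' \<in> F Q x u \<and> y \<in> H Q x))"

definition fres :: "(int \<Rightarrow> 'a) \<Rightarrow> int \<Rightarrow> int \<Rightarrow> 'a list" where
  "fres w t1 t2 = map w [t1..t2]"

definition sres :: "'a list \<Rightarrow> int \<Rightarrow> int \<Rightarrow> 'a list" where
  "sres s t1 t2 = map (\<lambda>i. s ! nat i) [t1..t2]"

definition beh :: "bool \<Rightarrow> ('x,'u,'y) sm \<Rightarrow> (int \<Rightarrow> ('u,'y) sig option) set" where
  "beh full Q' = {w. \<exists>\<mu> \<nu> \<xi>. (\<mu>,\<nu>,\<xi>) \<in> full_beh Q' \<and>
       (\<forall>k. w k = (if k < 0 then None else Some (piV full (\<mu> (nat k)) (\<nu> (nat k)))))}"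

definition behS :: "bool \<Rightarrow> ('x,'u,'y) sm \<Rightarrow>
    ((int \<Rightarrow> ('u,'y) sig option) \<times> (int \<Rightarrow> 'x option)) set" where
  "behS full Q = {(w,\<xi>). \<exists>\<mu> \<nu> \<xi>'. (\<mu>,\<nu>,\<xi>') \<in> full_beh Q \<and>
       (\<forall>k. w k = (if k < 0 then None else Some (piV full (\<mu> (nat k)) (\<nu> (nat k))))) \<and>
       (\<forall>k. \<xi> k = (if k < 0 then None else Some (\<xi>' (nat k))))}"

definition Pi_l :: "nat \<Rightarrow> (int \<Rightarrow> 'a) set \<Rightarrow> 'a list set" where
  "Pi_l l B = (\<Union>k::nat. (\<lambda>w. fres w (int k - int l + 1) (int k)) ` B)"

definition E :: "bool \<Rightarrow> ('x,'u,'y) sm \<Rightarrow> int \<Rightarrow> int \<Rightarrow> 'x \<Rightarrow> ('u,'y) sig option list set" where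
  "E full Q a b x = {\<zeta>. \<exists>w \<xi> (k::nat). (w,\<xi>) \<in> behS full Q \<and> \<xi> (int k) = Some x \<and>
       \<zeta> = fres w (int k + a) (int k + b)}"

definition EI :: "bool \<Rightarrow> ('x,'u,'y) sm \<Rightarrow> nat \<Rightarrow> nat \<Rightarrow> 'x \<Rightarrow> ('u,'y) sig option list set" where
  "EI full Q l m x = E full Q (int m - int l) (int m - 1) x"

definition future_unique :: "bool \<Rightarrow> ('x,'u,'y) sm \<Rightarrow> nat \<Rightarrow> nat \<Rightarrow> bool" where
  "future_unique full Q l m \<longleftrightarrow> (\<forall>x \<in> St Q. \<forall>\<zeta> \<in> EI full Q l m x. \<forall>\<zeta>' \<in> EI full Q l m x.
      sres \<zeta> (int l - int m) (int l - 1) = sres \<zeta>' (int l - int m) (int l - 1))"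

definition async_complete :: "bool \<Rightarrow> ('x,'u,'y) sm \<Rightarrow> nat \<Rightarrow> nat \<Rightarrow> bool" where
  "async_complete full Q l m \<longleftrightarrow> (\<forall>x \<in> St Q. \<forall>\<zeta> \<in> Pi_l (l+1) (beh full Q).
      sres \<zeta> 0 (int l - 1) \<in> EI full Q l m x \<longrightarrow> \<zeta> \<in> E full Q (int m - int l) (int m) x)"

definition abs_sm :: "bool \<Rightarrow> ('x,'u,'y) sm \<Rightarrow> nat \<Rightarrow> nat \<Rightarrow> (('u,'y) sig option list,'u,'y) sm" where
  "abs_sm full Q l m = \<lparr>
     St = (\<Union>x \<in> St Q. EI full Q l m x),
     In = In Q,
     Out = Out Q,
     Tr = {(xh,u,y,xh').
        sres xh' 0 (int l - int m - 1) =
          sres (sres xh 0 (int l - int m - 1) @ [Some (piV full u y)]) 1 (int l - int m) \<and>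
        sres xh (int l - int m) (int l - 1) =
          sres (Some (piV full u y) # sres xh' (int l - int m) (int l - 2)) 0 (int m - 1) \<and>
        (\<exists>x x'. xh \<in> EI full Q l m x \<and> xh' \<in> EI full Q l m x' \<and> (x,u,y,x') \<in> Tr Q)},
     Init = (\<Union>x \<in> Init Q. EI full Q l m x) \<rparr>"

definition sim_rel :: "('a,'u,'y) sm \<Rightarrow> ('b,'u,'y) sm \<Rightarrow> bool \<Rightarrow> ('a \<times> 'b) set \<Rightarrow> bool" where
  "sim_rel Q1 Q2 fullV R \<longleftrightarrow>
     (\<forall>x1 \<in> Init Q1. \<exists>x2 \<in> Init Q2. (x1,x2) \<in> R) \<and>
     (\<forall>(x1,x2) \<in> R. \<forall>u1 y1 x1'. (x1,u1,y1,x1') \<in> Tr Q1 \<longrightarrow>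
        (\<exists>u2 y2 x2'. (x2,u2,y2,x2') \<in> Tr Q2 \<and> (x1',x2') \<in> R \<and> piV fullV u1 y1 = piV fullV u2 y2))"

end

theory Submission
  imports Defs
begin

text \<open>
  A string corresponding to a state \<open>x\<close> is an \<open>l\<close>-letter window of the external signal of
  some run, placed so that its first \<open>l - m\<close> letters precede and its last \<open>m\<close> letters follow
  the visit to \<open>x\<close>. Conditions (1) and (2) on abstract transitions say exactly that the two
  abstract states are the first and the last \<open>l\<close> letters of one \<open>(l + 1)\<close>-letter window whose
  letter at position \<open>l - m\<close> is the current external letter. Runs can be spliced at any
  transition, so such a joined window is realised by a run through \<open>x\<close> as soon as its two
  halves correspond to the endpoints of a transition from \<open>x\<close>.

  (i) If the relation simulates \<open>Q\<close>, following a run and matching each of its transitions in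
  the abstract machine fixes, one letter at a time, the future part of every string
  corresponding to the current state: it is the actual future of the run. Conversely, under
  future uniqueness, splicing a transition \<open>x \<rightarrow> x'\<close> into a run realising a string at \<open>x\<close>
  reproduces that string, and the next window of the spliced run is the abstract successor.

  (ii) An abstract transition out of a string corresponding to \<open>x\<close> joins into an
  \<open>(l + 1)\<close>-window of the behaviour whose prefix corresponds to \<open>x\<close>; matching it by a
  transition of \<open>Q\<close> from \<open>x\<close> amounts to realising this window at \<open>x\<close>, which is
  asynchronous \<open>l\<close>-completeness.
\<close>

definition segment :: "(int \<Rightarrow> 'a) \<Rightarrow> int \<Rightarrow> nat \<Rightarrow> 'a list" where
  "segment w s n = map (\<lambda>i. w (s + int i)) [0..<n]"

lemma length_segment [simp]: "length (segment w s n) = n"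
  by (simp add: segment_def)

lemma nth_segment [simp]: "i < n \<Longrightarrow> segment w s n ! i = w (s + int i)"
  by (simp add: segment_def)

lemma take_segment [simp]: "k \<le> n \<Longrightarrow> take k (segment w s n) = segment w s k"
  by (simp add: segment_def take_map)

lemma tl_segment [simp]: "tl (segment w s (Suc n)) = segment w (s + 1) n"
  by (rule nth_equalityI) (simp_all add: nth_tl algebra_simps)

lemma tl_segment_ext:
  "tl (segment w (int k + int m - int l) (Suc l)) = segment w (int (Suc k) + int m - int l) l"
  by (simp add: algebra_simps)

lemma segment_cong:
  "(\<And>i. i < n \<Longrightarrow> w (s + int i) = w' (s + int i)) \<Longrightarrow> segment w s n = segment w' s n"
  by (simp add: segment_def)

lemma fres_eq_segment: "fres w a b = segment w a (nat (b - a + 1))"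
  by (rule nth_equalityI) (simp_all add: fres_def)

lemma sres_eq_take_drop:
  assumes "0 \<le> a" "b < int (length s)"
  shows "sres s a b = take (nat (b - a + 1)) (drop (nat a) s)"
  by (rule nth_equalityI) (use assms in \<open>auto simp: sres_def nat_add_distrib\<close>)

text \<open>The left-hand side is conditions (1) and (2) of the transition relation of \<^const>\<open>abs_sm\<close>.\<close>

lemma shift_conditions_iff_join:
  assumes "length a = l" "length a' = l" "m \<le> l"
  shows "(sres a' 0 (int l - int m - 1) = sres (sres a 0 (int l - int m - 1) @ [q]) 1 (int l - int m) \<and>
          sres a (int l - int m) (int l - 1) = sres (q # sres a' (int l - int m) (int l - 2)) 0 (int m - 1))
     \<longleftrightarrow> (\<exists>z. length z = Suc l \<and> take l z = a \<and> tl z = a' \<and> z ! (l - m) = q)"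
    (is "?shift \<longleftrightarrow> ?join")
proof -
  have "?shift \<longleftrightarrow> take (l - m) a' = tl (take (l - m) a @ [q]) \<and>
      drop (l - m) a = take m (q # drop (l - m) a')"
    using assms by (cases "m = l")
      (auto simp: sres_eq_take_drop nat_diff_distrib drop_Suc take_Cons' take_tl tl_append
        split: list.split)
  also have "\<dots> \<longleftrightarrow> ?join"
  proof
    assume h: "take (l - m) a' = tl (take (l - m) a @ [q]) \<and>
      drop (l - m) a = take m (q # drop (l - m) a')"
    let ?z = "take (l - m) a @ q # drop (l - m) a'"
    have "take l ?z = take (l - m) a @ drop (l - m) a"
      using h assms by (auto simp: min_def)
    then have "take l ?z = a" by simp
    moreover have "tl ?z = a'"
    proof (cases "l - m = 0")
      case False
      then have "tl ?z = tl (take (l - m) a @ [q]) @ drop (l - m) a'"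
        by (simp add: tl_append split: list.split)
      then show ?thesis using h by (metis append_take_drop_id)
    qed simp
    ultimately show ?join
      using assms by (intro exI[of _ ?z]) (simp add: nth_append)
  next
    assume ?join
    then obtain z where z: "length z = Suc l" "take l z = a" "tl z = a'" "z ! (l - m) = q" by blast
    have "take (l - m) a' = tl (take (Suc (l - m)) z)"
      unfolding z(3)[symmetric] by (rule take_tl)
    moreover have "drop (l - m) z = q # drop (l - m) a'"
      using z Cons_nth_drop_Suc[of "l - m" z] by (simp add: drop_Suc)
    ultimately show "take (l - m) a' = tl (take (l - m) a @ [q]) \<and>
        drop (l - m) a = take m (q # drop (l - m) a')"
      using z(1,4) assms(3) unfolding z(2)[symmetric]
      by (simp add: take_Suc_conv_app_nth drop_take min_def)
  qed
  finally show ?thesis .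
qed

definition signal :: "bool \<Rightarrow> (nat \<Rightarrow> 'u) \<Rightarrow> (nat \<Rightarrow> 'y) \<Rightarrow> int \<Rightarrow> ('u,'y) sig option" where
  "signal full \<mu> \<nu> t = (if t < 0 then None else Some (piV full (\<mu> (nat t)) (\<nu> (nat t))))"

lemma signal_of_nat [simp]: "signal full \<mu> \<nu> (int n) = Some (piV full (\<mu> n) (\<nu> n))"
  by (simp add: signal_def)

lemma signal_neg [simp]: "t < 0 \<Longrightarrow> signal full \<mu> \<nu> t = None"
  by (simp add: signal_def)

lemma mem_beh_iff:
  "w \<in> beh full Q \<longleftrightarrow> (\<exists>\<mu> \<nu> \<xi>. (\<mu>,\<nu>,\<xi>) \<in> full_beh Q \<and> w = signal full \<mu> \<nu>)"
  unfolding beh_def signal_def by (auto simp: fun_eq_iff)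

lemma mem_Pi_l_iff: "z \<in> Pi_l n B \<longleftrightarrow> (\<exists>k::nat. \<exists>w\<in>B. z = segment w (int k - int n + 1) n)"
  unfolding Pi_l_def by (auto simp: fres_eq_segment)

lemma mem_E_iff:
  "\<zeta> \<in> E full Q a b x \<longleftrightarrow> (\<exists>\<mu> \<nu> \<xi> k. (\<mu>,\<nu>,\<xi>) \<in> full_beh Q \<and> \<xi> k = x \<and>
     \<zeta> = segment (signal full \<mu> \<nu>) (int k + a) (nat (b - a + 1)))"
proof
  assume "\<zeta> \<in> E full Q a b x"
  then obtain w \<xi>o k \<mu> \<nu> \<xi> where "(\<mu>,\<nu>,\<xi>) \<in> full_beh Q"
    and w: "\<forall>t. w t = (if t < 0 then None else Some (piV full (\<mu> (nat t)) (\<nu> (nat t))))"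
    and "\<forall>t. \<xi>o t = (if t < 0 then None else Some (\<xi> (nat t)))"
    and "\<xi>o (int k) = Some x" "\<zeta> = fres w (int k + a) (int k + b)"
    unfolding E_def behS_def by blast
  moreover have "w = signal full \<mu> \<nu>"
    using w by (auto simp: signal_def)
  ultimately show "\<exists>\<mu> \<nu> \<xi> k. (\<mu>,\<nu>,\<xi>) \<in> full_beh Q \<and> \<xi> k = x \<and>
     \<zeta> = segment (signal full \<mu> \<nu>) (int k + a) (nat (b - a + 1))"
    by (auto simp: fres_eq_segment)
next
  assume "\<exists>\<mu> \<nu> \<xi> k. (\<mu>,\<nu>,\<xi>) \<in> full_beh Q \<and> \<xi> k = x \<and>
     \<zeta> = segment (signal full \<mu> \<nu>) (int k + a) (nat (b - a + 1))"
  then obtain \<mu> \<nu> \<xi> k where "(\<mu>,\<nu>,\<xi>) \<in> full_beh Q" "\<xi> k = x"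
      "\<zeta> = segment (signal full \<mu> \<nu>) (int k + a) (nat (b - a + 1))"
    by blast
  moreover have "(signal full \<mu> \<nu>, \<lambda>t. if t < 0 then None else Some (\<xi> (nat t))) \<in> behS full Q"
    using calculation(1) unfolding behS_def signal_def by auto
  ultimately show "\<zeta> \<in> E full Q a b x"
    unfolding E_def by (force simp: fres_eq_segment)
qed

lemma mem_EI_iff:
  "\<zeta> \<in> EI full Q l m x \<longleftrightarrow> (\<exists>\<mu> \<nu> \<xi> k. (\<mu>,\<nu>,\<xi>) \<in> full_beh Q \<and> \<xi> k = x \<and>
     \<zeta> = segment (signal full \<mu> \<nu>) (int k + int m - int l) l)"
  unfolding EI_def mem_E_iff by (simp add: algebra_simps)

lemma mem_E_ext_iff:
  "\<zeta> \<in> E full Q (int m - int l) (int m) x \<longleftrightarrow> (\<exists>\<mu> \<nu> \<xi> k. (\<mu>,\<nu>,\<xi>) \<in> full_beh Q \<and> \<xi> k = x \<and>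
     \<zeta> = segment (signal full \<mu> \<nu>) (int k + int m - int l) (Suc l))"
  unfolding mem_E_iff by (simp add: algebra_simps nat_add_distrib)

lemma length_of_mem_EI: "\<zeta> \<in> EI full Q l m x \<Longrightarrow> length \<zeta> = l"
  by (auto simp: mem_EI_iff)

lemma segment_mem_EI:
  "(\<mu>,\<nu>,\<xi>) \<in> full_beh Q \<Longrightarrow>
    segment (signal full \<mu> \<nu>) (int k + int m - int l) l \<in> EI full Q l m (\<xi> k)"
  by (auto simp: mem_EI_iff)

lemma length_of_mem_Pi_l: "\<zeta> \<in> Pi_l n B \<Longrightarrow> length \<zeta> = n"
  by (auto simp: mem_Pi_l_iff)

lemma E_ext_subset_Pi_l: "E full Q (int m - int l) (int m) x \<subseteq> Pi_l (Suc l) (beh full Q)"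
proof
  fix \<zeta> assume "\<zeta> \<in> E full Q (int m - int l) (int m) x"
  then obtain \<mu> \<nu> \<xi> k where "(\<mu>,\<nu>,\<xi>) \<in> full_beh Q"
      and \<zeta>: "\<zeta> = segment (signal full \<mu> \<nu>) (int k + int m - int l) (Suc l)"
    by (auto simp: mem_E_ext_iff)
  then have "signal full \<mu> \<nu> \<in> beh full Q"
    by (auto simp: mem_beh_iff)
  then show "\<zeta> \<in> Pi_l (Suc l) (beh full Q)"
    unfolding mem_Pi_l_iff \<zeta> by (intro exI[of _ "k + m"] bexI) (simp_all add: algebra_simps)
qed

lemma full_beh_Tr: "(\<mu>,\<nu>,\<xi>) \<in> full_beh Q \<Longrightarrow> (\<xi> k, \<mu> k, \<nu> k, \<xi> (Suc k)) \<in> Tr Q"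
  by (simp add: full_beh_def)

lemma state_in_St:
  "is_sm Q \<Longrightarrow> (\<mu>,\<nu>,\<xi>) \<in> full_beh Q \<Longrightarrow> \<xi> k \<in> St Q"
  unfolding is_sm_def full_beh_def by blast

lemma full_beh_splice:
  assumes traj: "(\<mu>,\<nu>,\<xi>) \<in> full_beh Q" "\<xi> k = x"
    and tr: "(x,u,y,x') \<in> Tr Q"
    and traj': "(\<mu>',\<nu>',\<xi>') \<in> full_beh Q" "\<xi>' k' = x'"
  obtains \<mu>'' \<nu>'' \<xi>'' where "(\<mu>'',\<nu>'',\<xi>'') \<in> full_beh Q" "\<xi>'' k = x" "\<xi>'' (Suc k) = x'"
    "\<And>t. t < int k \<Longrightarrow> signal full \<mu>'' \<nu>'' t = signal full \<mu> \<nu> t"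
    "signal full \<mu>'' \<nu>'' (int k) = Some (piV full u y)"
    "\<And>n. signal full \<mu>'' \<nu>'' (int k + 1 + int n) = signal full \<mu>' \<nu>' (int k' + int n)"
proof
  define \<mu>'' where "\<mu>'' n = (if n < k then \<mu> n else if n = k then u else \<mu>' (n - Suc k + k'))" for n
  define \<nu>'' where "\<nu>'' n = (if n < k then \<nu> n else if n = k then y else \<nu>' (n - Suc k + k'))" for n
  define \<xi>'' where "\<xi>'' n = (if n \<le> k then \<xi> n else \<xi>' (n - Suc k + k'))" for n
  have "(\<xi>'' n, \<mu>'' n, \<nu>'' n, \<xi>'' (Suc n)) \<in> Tr Q" for n
  proof -
    consider "n < k" | "n = k" | "k < n" by linarith
    then show ?thesis
    proof cases
      case 1
      then show ?thesis using full_beh_Tr[OF traj(1)] by (simp add: \<xi>''_def \<mu>''_def \<nu>''_def)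
    next
      case 2
      then show ?thesis using traj(2) tr traj'(2) by (simp add: \<xi>''_def \<mu>''_def \<nu>''_def)
    next
      case 3
      then have "Suc n - Suc k + k' = Suc (n - Suc k + k')" by simp
      then show ?thesis using 3 full_beh_Tr[OF traj'(1)] by (simp add: \<xi>''_def \<mu>''_def \<nu>''_def)
    qed
  qed
  then show "(\<mu>'',\<nu>'',\<xi>'') \<in> full_beh Q"
    using traj(1) by (simp add: full_beh_def \<xi>''_def)
  show "\<xi>'' k = x" "\<xi>'' (Suc k) = x'"
    using traj(2) traj'(2) by (simp_all add: \<xi>''_def)
  show "signal full \<mu>'' \<nu>'' t = signal full \<mu> \<nu> t" if "t < int k" for t
    using that by (cases "t < 0") (simp_all add: signal_def \<mu>''_def \<nu>''_def nat_less_iff)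
  show "signal full \<mu>'' \<nu>'' (int k) = Some (piV full u y)"
    by (simp add: \<mu>''_def \<nu>''_def)
  show "signal full \<mu>'' \<nu>'' (int k + 1 + int n) = signal full \<mu>' \<nu>' (int k' + int n)" for n
    using signal_of_nat[of full \<mu>'' \<nu>'' "Suc (k + n)"] signal_of_nat[of full \<mu>' \<nu>' "k' + n"]
    by (simp add: \<mu>''_def \<nu>''_def add.commute add.left_commute)
qed

lemma Tr_abs_sm_iff:
  assumes "m \<le> l"
  shows "(xh,u,y,xh') \<in> Tr (abs_sm full Q l m) \<longleftrightarrow>
    (\<exists>z. length z = Suc l \<and> take l z = xh \<and> tl z = xh' \<and> z ! (l - m) = Some (piV full u y)) \<and>
    (\<exists>x x'. xh \<in> EI full Q l m x \<and> xh' \<in> EI full Q l m x' \<and> (x,u,y,x') \<in> Tr Q)"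
proof (cases "\<exists>x x'. xh \<in> EI full Q l m x \<and> xh' \<in> EI full Q l m x' \<and> (x,u,y,x') \<in> Tr Q")
  case True
  then have "length xh = l" "length xh' = l"
    by (auto dest: length_of_mem_EI)
  with True show ?thesis
    by (simp add: abs_sm_def shift_conditions_iff_join[OF _ _ assms] del: One_nat_def)
qed (auto simp: abs_sm_def)

lemma sres_suffix_eq_drop:
  "length \<zeta> = l \<Longrightarrow> m \<le> l \<Longrightarrow> sres \<zeta> (int l - int m) (int l - 1) = drop (l - m) \<zeta>"
  by (simp add: sres_eq_take_drop nat_diff_distrib)

lemma sres_prefix_eq_take:
  "l \<le> length \<zeta> \<Longrightarrow> sres \<zeta> 0 (int l - 1) = take l \<zeta>"
  by (simp add: sres_eq_take_drop)

lemma future_unique_iff_drop: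
  assumes "m \<le> l"
  shows "future_unique full Q l m \<longleftrightarrow>
    (\<forall>x \<in> St Q. \<forall>\<zeta> \<in> EI full Q l m x. \<forall>\<zeta>' \<in> EI full Q l m x. drop (l - m) \<zeta> = drop (l - m) \<zeta>')"
  unfolding future_unique_def using assms by (simp add: length_of_mem_EI sres_suffix_eq_drop)

lemma async_complete_iff_take:
  "async_complete full Q l m \<longleftrightarrow>
    (\<forall>x \<in> St Q. \<forall>\<zeta> \<in> Pi_l (Suc l) (beh full Q).
       take l \<zeta> \<in> EI full Q l m x \<longrightarrow> \<zeta> \<in> E full Q (int m - int l) (int m) x)"
  unfolding async_complete_def by (simp add: length_of_mem_Pi_l sres_prefix_eq_take)

lemma join_mem_E_ext:
  assumes ml: "m \<le> l"
    and xh: "xh \<in> EI full Q l m x" and xh': "xh' \<in> EI full Q l m x'"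
    and tr: "(x,u,y,x') \<in> Tr Q"
    and z: "length z = Suc l" "take l z = xh" "tl z = xh'" "z ! (l - m) = Some (piV full u y)"
  shows "z \<in> E full Q (int m - int l) (int m) x"
proof -
  obtain \<mu> \<nu> \<xi> k where A: "(\<mu>,\<nu>,\<xi>) \<in> full_beh Q" "\<xi> k = x"
      "xh = segment (signal full \<mu> \<nu>) (int k + int m - int l) l"
    using xh by (auto simp: mem_EI_iff)
  obtain \<mu>' \<nu>' \<xi>' k' where B: "(\<mu>',\<nu>',\<xi>') \<in> full_beh Q" "\<xi>' k' = x'"
      "xh' = segment (signal full \<mu>' \<nu>') (int k' + int m - int l) l"
    using xh' by (auto simp: mem_EI_iff)
  obtain \<mu>'' \<nu>'' \<xi>'' where S: "(\<mu>'',\<nu>'',\<xi>'') \<in> full_beh Q" "\<xi>'' k = x"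
    "\<And>t. t < int k \<Longrightarrow> signal full \<mu>'' \<nu>'' t = signal full \<mu> \<nu> t"
    "signal full \<mu>'' \<nu>'' (int k) = Some (piV full u y)"
    "\<And>n. signal full \<mu>'' \<nu>'' (int k + 1 + int n) = signal full \<mu>' \<nu>' (int k' + int n)"
    using full_beh_splice[OF A(1,2) tr B(1,2)] by metis
  have "segment (signal full \<mu>'' \<nu>'') (int k + int m - int l) (Suc l) = z"
  proof (rule nth_equalityI)
    fix i assume "i < length (segment (signal full \<mu>'' \<nu>'') (int k + int m - int l) (Suc l))"
    then have i: "i \<le> l" by simp
    consider "i < l - m" | "i = l - m" | "l - m < i" by linarith
    then show "segment (signal full \<mu>'' \<nu>'') (int k + int m - int l) (Suc l) ! i = z ! i"
    proof cases
      case 1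
      then have "i < l" by simp
      then have "xh ! i = z ! i" by (simp flip: z(2))
      then show ?thesis using 1 \<open>i < l\<close> by (simp add: S(3) A(3))
    next
      case 2
      then show ?thesis using ml S(4) by (simp add: z(4))
    next
      case 3
      define j where "j = i - Suc (l - m)"
      have ij: "i = Suc (l - m + j)" "l - m + j < l" using 3 i j_def by auto
      have e: "int k + int m - int l + int i = int k + 1 + int j"
        "int k' + int m - int l + int (l - m + j) = int k' + int j"
        using ij(1) ml by simp_all
      have "segment (signal full \<mu>'' \<nu>'') (int k + int m - int l) (Suc l) ! i
          = signal full \<mu>'' \<nu>'' (int k + 1 + int j)"
        using i by (simp only: nth_segment[OF le_imp_less_Suc] e(1))
      also have "\<dots> = xh' ! (l - m + j)"
        by (simp only: S(5) B(3) nth_segment[OF ij(2)] e(2))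
      also have "\<dots> = z ! i"
        using ij z(1) by (simp add: nth_tl flip: z(3))
      finally show ?thesis .
    qed
  qed (simp add: z(1))
  then show ?thesis
    using S(1,2) by (auto simp: mem_E_ext_iff)
qed

definition corr_rel :: "bool \<Rightarrow> ('x,'u,'y) sm \<Rightarrow> nat \<Rightarrow> nat \<Rightarrow> ('x \<times> ('u,'y) sig option list) set" where
  "corr_rel full Q l m = {(x, xh). x \<in> St Q \<and> xh \<in> EI full Q l m x}"

lemma corresponding_string_step:
  assumes "is_sm Q" "m \<le> l" "sim_rel Q (abs_sm full Q l m) True (corr_rel full Q l m)"
    and traj: "(\<mu>,\<nu>,\<xi>) \<in> full_beh Q" and zh: "zh \<in> EI full Q l m (\<xi> k)"
  obtains xh' z where "xh' \<in> EI full Q l m (\<xi> (Suc k))"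
    "length z = Suc l" "take l z = zh" "tl z = xh'" "z ! (l - m) = signal full \<mu> \<nu> (int k)"
proof -
  have "(\<xi> k, zh) \<in> corr_rel full Q l m"
    using state_in_St[OF assms(1) traj] zh by (simp add: corr_rel_def)
  moreover note full_beh_Tr[OF traj, of k]
  ultimately obtain u y xh' where "(zh, u, y, xh') \<in> Tr (abs_sm full Q l m)"
      "(\<xi> (Suc k), xh') \<in> corr_rel full Q l m" "piV True (\<mu> k) (\<nu> k) = piV True u y"
    using assms(3) unfolding sim_rel_def by blast
  then show ?thesis
    using that by (auto simp: Tr_abs_sm_iff[OF assms(2)] corr_rel_def piV_def)
qed

lemma drop_corresponding_string:
  assumes "is_sm Q" "m \<le> l" "sim_rel Q (abs_sm full Q l m) True (corr_rel full Q l m)"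
    and "(\<mu>,\<nu>,\<xi>) \<in> full_beh Q" "zh \<in> EI full Q l m (\<xi> k)"
  shows "drop (l - m) zh = segment (signal full \<mu> \<nu>) (int k) m"
proof -
  have "zh ! (l - m + j) = signal full \<mu> \<nu> (int k + int j)"
    if "j < m" "zh \<in> EI full Q l m (\<xi> k)" for j k zh
    using that
  proof (induction j arbitrary: k zh)
    case 0
    obtain xh' z where "length z = Suc l" "take l z = zh" "z ! (l - m) = signal full \<mu> \<nu> (int k)"
      using corresponding_string_step[OF assms(1-4) "0.prems"(2)] by metis
    then show ?case using "0.prems"(1) assms(2) by auto
  next
    case (Suc j)
    obtain xh' z where z: "xh' \<in> EI full Q l m (\<xi> (Suc k))"
        "length z = Suc l" "take l z = zh" "tl z = xh'"
      using corresponding_string_step[OF assms(1-4) "Suc.prems"(2)] by metis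
    have "zh ! (l - m + Suc j) = xh' ! (l - m + j)"
      using Suc.prems(1) z(2) assms(2) by (simp flip: z(3,4) add: nth_tl)
    also have "\<dots> = signal full \<mu> \<nu> (int (Suc k) + int j)"
      using Suc.IH Suc.prems(1) z(1) by simp
    finally show ?case by (simp add: algebra_simps)
  qed
  then show ?thesis
    using assms(2,5) by (intro nth_equalityI) (simp_all add: length_of_mem_EI)
qed

lemma future_unique_if_sim_rel:
  assumes "is_sm Q" "m \<le> l" "sim_rel Q (abs_sm full Q l m) True (corr_rel full Q l m)"
  shows "future_unique full Q l m"
  unfolding future_unique_iff_drop[OF assms(2)]
proof (intro ballI)
  fix x \<zeta> \<zeta>' assume \<zeta>: "\<zeta> \<in> EI full Q l m x" and \<zeta>': "\<zeta>' \<in> EI full Q l m x"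
  then obtain \<mu> \<nu> \<xi> k where "(\<mu>,\<nu>,\<xi>) \<in> full_beh Q" "\<xi> k = x"
    by (auto simp: mem_EI_iff)
  then show "drop (l - m) \<zeta> = drop (l - m) \<zeta>'"
    using drop_corresponding_string[OF assms] \<zeta> \<zeta>' by metis
qed

lemma sim_rel_if_future_unique:
  assumes sm: "is_sm Q" and live: "live_reachable Q" and ml: "m \<le> l"
    and fu: "future_unique full Q l m"
  shows "sim_rel Q (abs_sm full Q l m) True (corr_rel full Q l m)"
proof -
  have "\<exists>xh \<in> Init (abs_sm full Q l m). (x, xh) \<in> corr_rel full Q l m" if x: "x \<in> Init Q" for x
  proof -
    obtain \<mu> \<nu> \<xi> where "(\<mu>,\<nu>,\<xi>) \<in> full_beh Q" "\<xi> 0 = x"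
      using live x unfolding live_reachable_def by blast
    then have "segment (signal full \<mu> \<nu>) (int 0 + int m - int l) l \<in> EI full Q l m x"
      using segment_mem_EI by metis
    then show ?thesis
      using x sm by (auto simp: abs_sm_def corr_rel_def is_sm_def)
  qed
  moreover have "\<exists>xh'. (xh, u, y, xh') \<in> Tr (abs_sm full Q l m) \<and> (x', xh') \<in> corr_rel full Q l m"
    if xh: "(x, xh) \<in> corr_rel full Q l m" and tr: "(x, u, y, x') \<in> Tr Q" for x xh u y x'
  proof -
    obtain \<mu> \<nu> \<xi> k where A: "(\<mu>,\<nu>,\<xi>) \<in> full_beh Q" "\<xi> k = x"
        "xh = segment (signal full \<mu> \<nu>) (int k + int m - int l) l"
      using xh by (auto simp: corr_rel_def mem_EI_iff)
    have x': "x' \<in> St Q"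
      using sm tr unfolding is_sm_def by blast
    then obtain \<mu>' \<nu>' \<xi>' k' where B: "(\<mu>',\<nu>',\<xi>') \<in> full_beh Q" "\<xi>' k' = x'"
      using live unfolding live_reachable_def by blast
    obtain \<mu>'' \<nu>'' \<xi>'' where S: "(\<mu>'',\<nu>'',\<xi>'') \<in> full_beh Q" "\<xi>'' k = x" "\<xi>'' (Suc k) = x'"
      "\<And>t. t < int k \<Longrightarrow> signal full \<mu>'' \<nu>'' t = signal full \<mu> \<nu> t"
      "signal full \<mu>'' \<nu>'' (int k) = Some (piV full u y)"
      using full_beh_splice[OF A(1,2) tr B] by metis
    define z where "z = segment (signal full \<mu>'' \<nu>'') (int k + int m - int l) (Suc l)"
    have past: "take (l - m) (take l z) = take (l - m) xh"
      using ml unfolding z_def A(3) by (auto simp: min_def S(4) intro: segment_cong)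
    have current: "take l z \<in> EI full Q l m x"
      using segment_mem_EI[OF S(1), of full k m l] S(2) by (simp add: z_def)
    have successor: "tl z \<in> EI full Q l m x'"
      using segment_mem_EI[OF S(1), of full "Suc k" m l] S(3) by (simp only: z_def tl_segment_ext)
    have "drop (l - m) (take l z) = drop (l - m) xh"
      using fu xh current unfolding future_unique_iff_drop[OF ml] corr_rel_def by blast
    with past have "take l z = xh"
      by (metis append_take_drop_id)
    moreover have "z ! (l - m) = Some (piV full u y)"
      using ml S(5) by (simp add: z_def)
    moreover have "length z = Suc l"
      by (simp add: z_def)
    ultimately have "(xh, u, y, tl z) \<in> Tr (abs_sm full Q l m)"
      unfolding Tr_abs_sm_iff[OF ml] using xh tr successor unfolding corr_rel_def by blast
    then show ?thesis
      using x' successor by (auto simp: corr_rel_def)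
  qed
  ultimately show ?thesis
    unfolding sim_rel_def by fast
qed

lemma async_complete_if_sim_rel_converse:
  assumes ml: "m \<le> l" and sim: "sim_rel (abs_sm full Q l m) Q full ((corr_rel full Q l m)\<inverse>)"
  shows "async_complete full Q l m"
  unfolding async_complete_iff_take
proof (intro ballI impI)
  fix x \<zeta> assume x: "x \<in> St Q" and \<zeta>: "\<zeta> \<in> Pi_l (Suc l) (beh full Q)"
    and past: "take l \<zeta> \<in> EI full Q l m x"
  obtain K :: nat and \<mu> \<nu> \<xi> where traj: "(\<mu>,\<nu>,\<xi>) \<in> full_beh Q"
      and \<zeta>_seg: "\<zeta> = segment (signal full \<mu> \<nu>) (int K - int l) (Suc l)"
    using \<zeta> by (auto simp: mem_Pi_l_iff mem_beh_iff)
  \<comment> \<open>otherwise the present letter of \<open>take l \<zeta>\<close> is padding, which no corresponding string has\<close>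
  have "m \<le> K"
  proof (rule ccontr)
    assume "\<not> m \<le> K"
    then have "l - m < l" and absent: "\<zeta> ! (l - m) = None"
      using ml by (simp_all add: \<zeta>_seg)
    obtain \<mu>' \<nu>' \<xi>' k where "take l \<zeta> = segment (signal full \<mu>' \<nu>') (int k + int m - int l) l"
      using past by (auto simp: mem_EI_iff)
    then have "take l \<zeta> ! (l - m) = signal full \<mu>' \<nu>' (int k)"
      using \<open>l - m < l\<close> ml by simp
    with absent \<open>l - m < l\<close> show False by simp
  qed
  define k where "k = K - m"
  have \<zeta>_k: "\<zeta> = segment (signal full \<mu> \<nu>) (int k + int m - int l) (Suc l)"
    using \<zeta>_seg \<open>m \<le> K\<close> by (simp add: k_def)
  have "take l \<zeta> \<in> EI full Q l m (\<xi> k)" "tl \<zeta> \<in> EI full Q l m (\<xi> (Suc k))"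
    using segment_mem_EI[OF traj, of full k m l] segment_mem_EI[OF traj, of full "Suc k" m l]
    by (simp_all only: \<zeta>_k take_segment le_SucI order_refl tl_segment_ext)
  moreover note full_beh_Tr[OF traj, of k]
  moreover have "\<zeta> ! (l - m) = Some (piV full (\<mu> k) (\<nu> k))"
    using ml by (simp add: \<zeta>_k)
  ultimately have "(take l \<zeta>, \<mu> k, \<nu> k, tl \<zeta>) \<in> Tr (abs_sm full Q l m)"
    unfolding Tr_abs_sm_iff[OF ml] using length_of_mem_Pi_l[OF \<zeta>] by blast
  moreover have "(take l \<zeta>, x) \<in> (corr_rel full Q l m)\<inverse>"
    using x past by (simp add: corr_rel_def)
  ultimately obtain u y x' where "(x, u, y, x') \<in> Tr Q" "tl \<zeta> \<in> EI full Q l m x'"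
      "piV full (\<mu> k) (\<nu> k) = piV full u y"
    using sim unfolding sim_rel_def corr_rel_def by blast
  then show "\<zeta> \<in> E full Q (int m - int l) (int m) x"
    using join_mem_E_ext[OF ml past] ml by (simp add: \<zeta>_k)
qed

lemma sim_rel_converse_if_async_complete:
  assumes sm: "is_sm Q" and ml: "m \<le> l" and ac: "async_complete full Q l m"
  shows "sim_rel (abs_sm full Q l m) Q full ((corr_rel full Q l m)\<inverse>)"
proof -
  have "\<exists>x \<in> Init Q. (xh, x) \<in> (corr_rel full Q l m)\<inverse>" if "xh \<in> Init (abs_sm full Q l m)" for xh
    using that sm by (auto simp: abs_sm_def corr_rel_def is_sm_def)
  moreover have "\<exists>u' y' x'. (x, u', y', x') \<in> Tr Q \<and> (xh', x') \<in> (corr_rel full Q l m)\<inverse> \<and>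
      piV full u y = piV full u' y'"
    if xh: "(xh, x) \<in> (corr_rel full Q l m)\<inverse>" and tr: "(xh, u, y, xh') \<in> Tr (abs_sm full Q l m)"
    for xh x u y xh'
  proof -
    obtain z x1 x1' where z: "length z = Suc l" "take l z = xh" "tl z = xh'"
        "z ! (l - m) = Some (piV full u y)"
      and "xh \<in> EI full Q l m x1" "xh' \<in> EI full Q l m x1'" "(x1, u, y, x1') \<in> Tr Q"
      using tr unfolding Tr_abs_sm_iff[OF ml] by blast
    then have "z \<in> E full Q (int m - int l) (int m) x1"
      by (intro join_mem_E_ext[OF ml])
    then have "z \<in> Pi_l (Suc l) (beh full Q)"
      by (rule subsetD[OF E_ext_subset_Pi_l])
    then have "z \<in> E full Q (int m - int l) (int m) x"
      using ac xh z(2) unfolding async_complete_iff_take corr_rel_def by blast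
    then obtain \<mu> \<nu> \<xi> k where traj: "(\<mu>,\<nu>,\<xi>) \<in> full_beh Q" "\<xi> k = x"
        and z_k: "z = segment (signal full \<mu> \<nu>) (int k + int m - int l) (Suc l)"
      by (auto simp: mem_E_ext_iff)
    have "(x, \<mu> k, \<nu> k, \<xi> (Suc k)) \<in> Tr Q"
      using full_beh_Tr[OF traj(1), of k] traj(2) by simp
    moreover have "(xh', \<xi> (Suc k)) \<in> (corr_rel full Q l m)\<inverse>"
      using segment_mem_EI[OF traj(1), of full "Suc k" m l] state_in_St[OF sm traj(1)]
      unfolding corr_rel_def z(3)[symmetric] z_k tl_segment_ext by simp
    moreover have "piV full u y = piV full (\<mu> k) (\<nu> k)"
      using z(4) ml by (simp add: z_k)
    ultimately show ?thesis by blast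
  qed
  ultimately show ?thesis
    unfolding sim_rel_def by fast
qed

theorem theorem3:
  fixes Q :: "('x,'u,'y) sm" and full :: bool and l m :: nat
  assumes "is_sm Q"
    and "live_reachable Q"
    and "standing_tr Q"
    and "W_finite Q full"
    and "m \<le> l"
  defines "R \<equiv> {(x, xh). x \<in> St Q \<and> xh \<in> St (abs_sm full Q l m) \<and> xh \<in> EI full Q l m x}"
  shows "(sim_rel Q (abs_sm full Q l m) True R \<longleftrightarrow> future_unique full Q l m) \<and>
         (sim_rel (abs_sm full Q l m) Q full (R\<inverse>) \<longleftrightarrow> async_complete full Q l m)"
proof -
  have "R = corr_rel full Q l m"
    unfolding R_def corr_rel_def by (auto simp: abs_sm_def)
  then show ?thesis
    using future_unique_if_sim_rel sim_rel_if_future_unique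
      async_complete_if_sim_rel_converse sim_rel_converse_if_async_complete assms(1,2,5)
    by metis
qed

end
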